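(* Let $\phi:\mathbb{D}\to\overline{\mathbb{D}}$ be a non-constant analytic function such that the composition operator $C_\phi f=f\circ\phi$ maps $A^+$ into itself. Then $C_\phi:A^+\to A^+$ is compact if and only if $\|\phi\|_\infty=\sup_{z\in\mathbb{D}}|\phi(z)|<1$.
   Context: $\mathbb{D}$ is the open unit disk. $A^+$ is the Wiener algebra of functions $f(z)=\sum_{n\ge0}a_nz^n$ with $\|f\|_{A^+}=\sum_{n\ge0}|a_n|<\infty$ (a commutative unital Banach algebra under pointwise multiplication, with spectrum $\overline{\mathbb{D}}$). *)

theory Defs
  imports "HOL-Analysis.Analysis"
begin

text \<open>Elements of the Wiener algebra A+ are represented by their Taylor coefficient
  sequences a with sum of norm (a n) finite; the associated function is
  z maps to the sum over n of a n * z^n, and the norm is the l1 norm of the coefficients.\<close>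

definition wiener :: "(nat \<Rightarrow> complex) set" where
  "wiener = {a. summable (\<lambda>n. norm (a n))}"

definition wfun :: "(nat \<Rightarrow> complex) \<Rightarrow> complex \<Rightarrow> complex" where
  "wfun a z = (\<Sum>n. a n * z ^ n)"

definition wnorm :: "(nat \<Rightarrow> complex) \<Rightarrow> real" where
  "wnorm a = (\<Sum>n. norm (a n))"

definition comp_image :: "(complex \<Rightarrow> complex) \<Rightarrow> (nat \<Rightarrow> complex) \<Rightarrow> (nat \<Rightarrow> complex) \<Rightarrow> bool" where
  "comp_image \<phi> a b \<longleftrightarrow> b \<in> wiener \<and> (\<forall>z\<in>ball 0 1. wfun b z = wfun a (\<phi> z))"

definition comp_maps_wiener :: "(complex \<Rightarrow> complex) \<Rightarrow> bool" where
  "comp_maps_wiener \<phi> \<longleftrightarrow> (\<forall>a\<in>wiener. \<exists>b. comp_image \<phi> a b)"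

text \<open>C_phi is compact on A+: every bounded sequence is mapped to a sequence having
  a subsequence convergent in the A+ norm (A+ is complete, so this is relative
  compactness of the image of the unit ball).\<close>
definition comp_compact :: "(complex \<Rightarrow> complex) \<Rightarrow> bool" where
  "comp_compact \<phi> \<longleftrightarrow>
     (\<forall>(A :: nat \<Rightarrow> nat \<Rightarrow> complex) (B :: nat \<Rightarrow> nat \<Rightarrow> complex). (\<forall>k. A k \<in> wiener) \<longrightarrow> (\<exists>M. \<forall>k. wnorm (A k) \<le> M) \<longrightarrow>
        (\<forall>k. comp_image \<phi> (A k) (B k)) \<longrightarrow>
        (\<exists>(r :: nat \<Rightarrow> nat) c. strict_mono r \<and> c \<in> wiener \<and>
               (\<lambda>k. wnorm (\<lambda>n. B (r k) n - c n)) \<longlonglongrightarrow> 0))"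

end

theory Submission
  imports Defs "HOL-Complex_Analysis.Complex_Analysis" "HOL-Library.Diagonal_Subsequence"
begin

text \<open>
  By the open mapping theorem \<phi> maps the disc into itself. If C_\<phi> is compact, the images
  \<phi>^k of the monomials z^k have a subsequence converging in A+; its limit vanishes on the
  disc because \<phi>^k \<rightarrow> 0 pointwise, so |\<phi>|^m \<le> \<parallel>\<phi>^m\<parallel> < 1/2 for some m \<ge> 1 and hence
  sup |\<phi>| < 1.

  Conversely, let sup |\<phi>| = \<rho> < 1 and let P be the coefficient sequence of \<phi>. Writing
  P = Q + R with Q a polynomial of degree N and \<parallel>R\<parallel> \<le> \<epsilon>, Cauchy's estimates and the degree
  bound give \<parallel>Q^k\<parallel> \<le> (kN + 1) (\<rho> + \<epsilon>)^k, and the binomial theorem yields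
  \<parallel>P^n\<parallel> \<le> (nN + 1) (\<rho> + 2\<epsilon>)^n \<rightarrow> 0. Now C_\<phi> f = \<Sum> a_n P^n: a bounded sequence in A+
  has a coefficientwise convergent diagonal subsequence, and as \<parallel>P^n\<parallel> \<rightarrow> 0 the images of
  that subsequence converge in norm.
\<close>

lemma wiener_iff: "a \<in> wiener \<longleftrightarrow> summable (\<lambda>n. norm (a n))"
  by (simp add: wiener_def)

lemma wnorm_nonneg: "a \<in> wiener \<Longrightarrow> 0 \<le> wnorm a"
  by (simp add: wiener_iff wnorm_def suminf_nonneg)

lemma norm_le_wnorm: "a \<in> wiener \<Longrightarrow> norm (a n) \<le> wnorm a"
  using sum_le_suminf[of "\<lambda>k. norm (a k)" "{n}"] by (simp add: wiener_iff wnorm_def)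

lemma wiener_add:
  assumes "a \<in> wiener" "b \<in> wiener"
  shows "(\<lambda>n. a n + b n) \<in> wiener" "wnorm (\<lambda>n. a n + b n) \<le> wnorm a + wnorm b"
proof -
  have s: "summable (\<lambda>n. norm (a n) + norm (b n))"
    using assms by (simp add: wiener_iff summable_add)
  show ab: "(\<lambda>n. a n + b n) \<in> wiener"
    unfolding wiener_iff
    by (rule summable_comparison_test'[OF s, of 0]) (simp add: norm_triangle_ineq)
  have "wnorm (\<lambda>n. a n + b n) \<le> (\<Sum>n. norm (a n) + norm (b n))"
    using ab unfolding wnorm_def wiener_iff by (intro suminf_le s) (auto simp: norm_triangle_ineq)
  also have "\<dots> = wnorm a + wnorm b"
    using assms by (simp add: wnorm_def wiener_iff suminf_add)
  finally show "wnorm (\<lambda>n. a n + b n) \<le> wnorm a + wnorm b" .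
qed

lemma wiener_cmult:
  assumes "a \<in> wiener"
  shows "(\<lambda>n. c * a n) \<in> wiener" "wnorm (\<lambda>n. c * a n) = norm c * wnorm a"
  using assms by (simp_all add: wiener_iff wnorm_def norm_mult summable_mult suminf_mult)

lemma wiener_diff:
  assumes "a \<in> wiener" "b \<in> wiener"
  shows "(\<lambda>n. a n - b n) \<in> wiener" "wnorm (\<lambda>n. a n - b n) \<le> wnorm a + wnorm b"
  using wiener_add[OF assms(1) wiener_cmult(1)[OF assms(2), of "-1"]] wiener_cmult(2)[OF assms(2), of "-1"]
  by simp_all

lemma wiener_sum:
  assumes "\<And>k. k \<in> S \<Longrightarrow> a k \<in> wiener"
  shows "(\<lambda>n. \<Sum>k\<in>S. a k n) \<in> wiener" "wnorm (\<lambda>n. \<Sum>k\<in>S. a k n) \<le> (\<Sum>k\<in>S. wnorm (a k))"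
proof -
  have "(\<lambda>n. \<Sum>k\<in>S. a k n) \<in> wiener \<and> wnorm (\<lambda>n. \<Sum>k\<in>S. a k n) \<le> (\<Sum>k\<in>S. wnorm (a k))"
    using assms
  proof (induction S rule: infinite_finite_induct)
    case (insert k S)
    then show ?case
      using wiener_add[of "a k" "\<lambda>n. \<Sum>k\<in>S. a k n"] by auto
  qed (simp_all add: wiener_iff wnorm_def)
  then show "(\<lambda>n. \<Sum>k\<in>S. a k n) \<in> wiener" "wnorm (\<lambda>n. \<Sum>k\<in>S. a k n) \<le> (\<Sum>k\<in>S. wnorm (a k))"
    by auto
qed

lemma wiener_finite_support:
  assumes "\<And>n. N < n \<Longrightarrow> a n = 0"
  shows "a \<in> wiener" "(\<And>n. norm (a n) \<le> K) \<Longrightarrow> wnorm a \<le> (real N + 1) * K"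
proof -
  have s: "(\<lambda>n. norm (a n)) sums (\<Sum>n\<le>N. norm (a n))"
    by (rule sums_finite) (use assms in auto)
  then show "a \<in> wiener" unfolding wiener_iff by (rule sums_summable)
  assume "\<And>n. norm (a n) \<le> K"
  then have "(\<Sum>n\<le>N. norm (a n)) \<le> (\<Sum>n\<le>N. K)" by (rule sum_mono)
  then show "wnorm a \<le> (real N + 1) * K"
    using sums_unique[OF s] by (simp add: wnorm_def add.commute)
qed

lemma wiener_pointwise_limit:
  assumes "\<And>k. A k \<in> wiener" "\<And>k. wnorm (A k) \<le> M" "\<And>n. (\<lambda>k. A k n) \<longlonglongrightarrow> a n"
  shows "a \<in> wiener" "wnorm a \<le> M"
proof -
  have partial: "(\<Sum>n<N. norm (a n)) \<le> M" for N
  proof -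
    have "(\<Sum>n<N. norm (A k n)) \<le> M" for k
      using sum_le_suminf[of "\<lambda>n. norm (A k n)" "{..<N}"] assms(1,2)[of k]
      by (simp add: wiener_iff wnorm_def)
    moreover have "(\<lambda>k. \<Sum>n<N. norm (A k n)) \<longlonglongrightarrow> (\<Sum>n<N. norm (a n))"
      by (intro tendsto_sum tendsto_norm assms(3))
    ultimately show ?thesis by (intro LIMSEQ_le_const2) auto
  qed
  then show a: "a \<in> wiener"
    unfolding wiener_iff by (intro summableI_nonneg_bounded) auto
  show "wnorm a \<le> M"
    unfolding wnorm_def by (rule suminf_le_const) (use a partial in \<open>auto simp: wiener_iff\<close>)
qed

lemma summable_norm_wfun:
  assumes "a \<in> wiener" "norm z \<le> 1"
  shows "summable (\<lambda>n. norm (a n * z ^ n))"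
  by (rule summable_comparison_test'[of "\<lambda>n. norm (a n)" 0])
     (use assms in \<open>auto simp: wiener_iff norm_mult norm_power mult_left_le power_le_one\<close>)

lemma norm_wfun_le_wnorm:
  assumes "a \<in> wiener" "norm z \<le> 1"
  shows "norm (wfun a z) \<le> wnorm a"
proof -
  have "norm (wfun a z) \<le> (\<Sum>n. norm (a n * z ^ n))"
    unfolding wfun_def by (rule summable_norm[OF summable_norm_wfun[OF assms]])
  also have "\<dots> \<le> wnorm a"
    unfolding wnorm_def using assms summable_norm_wfun[OF assms]
    by (intro suminf_le) (auto simp: wiener_iff norm_mult norm_power mult_left_le power_le_one)
  finally show ?thesis .
qed

lemma wfun_diff:
  assumes "a \<in> wiener" "b \<in> wiener" "norm z \<le> 1"
  shows "wfun (\<lambda>n. a n - b n) z = wfun a z - wfun b z"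
  using suminf_diff[OF summable_norm_cancel[OF summable_norm_wfun[OF assms(1,3)]]
                       summable_norm_cancel[OF summable_norm_wfun[OF assms(2,3)]]]
  by (simp add: wfun_def left_diff_distrib)

definition monomial_coeffs :: "nat \<Rightarrow> nat \<Rightarrow> complex" where
  "monomial_coeffs k n = (if n = k then 1 else 0)"

lemma monomial_coeffs:
  "monomial_coeffs k \<in> wiener" "wnorm (monomial_coeffs k) = 1" "wfun (monomial_coeffs k) z = z ^ k"
proof -
  have "(\<lambda>n. norm (monomial_coeffs k n)) = (\<lambda>n. if n = k then 1 else 0)"
    by (auto simp: monomial_coeffs_def)
  then have "(\<lambda>n. norm (monomial_coeffs k n)) sums 1"
    using sums_single[of k "\<lambda>_. 1::real"] by simp
  then show "monomial_coeffs k \<in> wiener" "wnorm (monomial_coeffs k) = 1"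
    by (auto simp: wiener_iff wnorm_def sums_iff)
  have "(\<lambda>n. monomial_coeffs k n * z ^ n) = (\<lambda>n. if n = k then z ^ k else 0)"
    by (auto simp: monomial_coeffs_def)
  then have "(\<lambda>n. monomial_coeffs k n * z ^ n) sums z ^ k"
    using sums_single[of k "\<lambda>_. z ^ k"] by simp
  then show "wfun (monomial_coeffs k) z = z ^ k" by (simp add: wfun_def sums_iff)
qed

lemma eval_fps_eq_wfun: "eval_fps f z = wfun (fps_nth f) z"
  by (simp add: eval_fps_def wfun_def)

lemma wiener_fps_conv_radius:
  assumes "fps_nth f \<in> wiener"
  shows "1 \<le> fps_conv_radius f"
proof -
  have "summable (\<lambda>n. fps_nth f n * 1 ^ n)"
    using assms by (simp add: wiener_iff summable_norm_cancel)
  from conv_radius_geI[OF this] show ?thesis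
    by (simp add: fps_conv_radius_def one_ereal_def)
qed

lemma wiener_fps_in_radius:
  assumes "fps_nth f \<in> wiener" "norm z < 1"
  shows "ereal (norm z) < fps_conv_radius f"
  using wiener_fps_conv_radius[OF assms(1)] assms(2) by (meson ereal_less(3) less_le_trans)

lemma wiener_fps_mult:
  fixes f g :: "complex fps"
  assumes "fps_nth f \<in> wiener" "fps_nth g \<in> wiener"
  shows "fps_nth (f * g) \<in> wiener" "wnorm (fps_nth (f * g)) \<le> wnorm (fps_nth f) * wnorm (fps_nth g)"
proof -
  let ?a = "\<lambda>n. norm (fps_nth f n)" and ?b = "\<lambda>n. norm (fps_nth g n)"
  have cauchy: "(\<lambda>n. \<Sum>i\<le>n. ?a i * ?b (n - i)) sums (wnorm (fps_nth f) * wnorm (fps_nth g))"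
    unfolding wnorm_def by (rule Cauchy_product_sums) (use assms in \<open>auto simp: wiener_iff\<close>)
  have le: "norm (fps_nth (f * g) n) \<le> (\<Sum>i\<le>n. ?a i * ?b (n - i))" for n
    unfolding fps_mult_nth atLeast0AtMost by (rule order_trans[OF norm_sum]) (simp add: norm_mult)
  show fg: "fps_nth (f * g) \<in> wiener"
    unfolding wiener_iff by (rule summable_comparison_test'[OF sums_summable[OF cauchy]]) (use le in auto)
  have "wnorm (fps_nth (f * g)) \<le> (\<Sum>n. \<Sum>i\<le>n. ?a i * ?b (n - i))"
    using fg le sums_summable[OF cauchy] unfolding wnorm_def wiener_iff by (intro suminf_le) auto
  then show "wnorm (fps_nth (f * g)) \<le> wnorm (fps_nth f) * wnorm (fps_nth g)"
    using sums_unique[OF cauchy] by simp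
qed

lemma wiener_fps_power:
  fixes f :: "complex fps"
  assumes "fps_nth f \<in> wiener"
  shows "fps_nth (f ^ n) \<in> wiener" "wnorm (fps_nth (f ^ n)) \<le> wnorm (fps_nth f) ^ n"
proof -
  have "fps_nth (f ^ n) \<in> wiener \<and> wnorm (fps_nth (f ^ n)) \<le> wnorm (fps_nth f) ^ n"
  proof (induction n)
    case 0
    have "fps_nth (1 :: complex fps) = monomial_coeffs 0"
      by (auto simp: monomial_coeffs_def)
    then show ?case using monomial_coeffs[of 0] by simp
  next
    case (Suc n)
    then have "wnorm (fps_nth (f * f ^ n)) \<le> wnorm (fps_nth f) * wnorm (fps_nth (f ^ n))"
      using wiener_fps_mult[OF assms] by blast
    also have "\<dots> \<le> wnorm (fps_nth f) * wnorm (fps_nth f) ^ n"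
      using Suc wnorm_nonneg[OF assms] by (simp add: mult_left_mono)
    finally show ?case using Suc wiener_fps_mult[OF assms] by simp
  qed
  then show "fps_nth (f ^ n) \<in> wiener" "wnorm (fps_nth (f ^ n)) \<le> wnorm (fps_nth f) ^ n"
    by auto
qed

lemma norm_fps_nth_le_bound:
  fixes f :: "complex fps"
  assumes radius: "1 \<le> fps_conv_radius f"
    and bound: "\<And>z. norm z < 1 \<Longrightarrow> norm (eval_fps f z) \<le> K"
  shows "norm (fps_nth f j) \<le> K"
proof -
  have cauchy: "norm (fps_nth f j) * r ^ j \<le> K" if r: "0 < r" "r < 1" for r
  proof -
    have disc: "cball 0 r \<subseteq> eball 0 (fps_conv_radius f)"
      using r radius by (auto simp: subset_eq dist_norm intro: less_le_trans[of _ 1])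
    have estimate: "norm ((deriv ^^ j) (eval_fps f) 0) \<le> fact j * K / r ^ j"
    proof (rule Cauchy_inequality)
      show "eval_fps f holomorphic_on ball 0 r"
        by (rule holomorphic_on_eval_fps) (use disc in auto)
      show "continuous_on (cball 0 r) (eval_fps f)"
        by (rule continuous_on_subset[OF continuous_on_eval_fps disc])
    qed (use r bound in auto)
    have "fps_nth f j = (deriv ^^ j) (eval_fps f) 0 / fact j"
      by (rule fps_nth_conv_deriv) (use radius in \<open>auto intro: less_le_trans[of _ 1]\<close>)
    then have "norm (fps_nth f j) = norm ((deriv ^^ j) (eval_fps f) 0) / fact j"
      by (simp add: norm_divide)
    also have "\<dots> \<le> (fact j * K / r ^ j) / fact j"
      by (rule divide_right_mono[OF estimate]) simp
    finally show ?thesis using r by (simp add: field_simps)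
  qed
  have "((\<lambda>r. norm (fps_nth f j) * r ^ j) \<longlongrightarrow> norm (fps_nth f j) * 1 ^ j) (at_left 1)"
    by (intro tendsto_intros)
  moreover have "\<forall>\<^sub>F r in at_left 1. norm (fps_nth f j) * r ^ j \<le> K"
    by (subst eventually_at_left[of 0]) (auto intro!: exI[of _ 0] cauchy)
  ultimately show ?thesis
    by (auto intro: tendsto_upperbound)
qed

lemma wiener_unique:
  assumes "a \<in> wiener" "b \<in> wiener" "\<And>z. norm z < 1 \<Longrightarrow> wfun a z = wfun b z"
  shows "a = b"
proof
  fix j
  let ?f = "Abs_fps (\<lambda>n. a n - b n)"
  have nth: "fps_nth ?f = (\<lambda>n. a n - b n)" by (simp add: fun_eq_iff)
  then have "fps_nth ?f \<in> wiener" using wiener_diff(1)[OF assms(1,2)] by simp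
  then have "norm (fps_nth ?f j) \<le> 0"
    by (rule norm_fps_nth_le_bound[OF wiener_fps_conv_radius])
       (simp add: eval_fps_eq_wfun nth wfun_diff assms)
  then show "a j = b j" by simp
qed

lemma fps_nth_mult_eq_0_above:
  fixes f g :: "'a::semiring_0 fps"
  assumes "\<And>n. M < n \<Longrightarrow> fps_nth f n = 0" "\<And>n. N < n \<Longrightarrow> fps_nth g n = 0" "M + N < n"
  shows "fps_nth (f * g) n = 0"
  unfolding fps_mult_nth
proof (rule sum.neutral, rule ballI)
  fix i assume "i \<in> {0..n}"
  show "fps_nth f i * fps_nth g (n - i) = 0"
  proof (cases "M < i")
    case False
    then have "N < n - i" using assms(3) by linarith
    then show ?thesis using assms(2) by simp
  qed (use assms(1) in simp)
qed

lemma fps_nth_power_eq_0_above: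
  fixes f :: "'a::semiring_1 fps"
  assumes "\<And>n. N < n \<Longrightarrow> fps_nth f n = 0"
  shows "k * N < n \<Longrightarrow> fps_nth (f ^ k) n = 0"
proof (induction k arbitrary: n)
  case (Suc k)
  show ?case unfolding power_Suc
    by (rule fps_nth_mult_eq_0_above[of N _ "k * N"]) (use assms Suc in auto)
qed simp

lemma wnorm_power_finite_support_le:
  fixes Q :: "complex fps"
  assumes support: "\<And>n. N < n \<Longrightarrow> fps_nth Q n = 0"
    and bound: "\<And>z. norm z < 1 \<Longrightarrow> norm (eval_fps Q z) \<le> c"
  shows "wnorm (fps_nth (Q ^ k)) \<le> (real k * real N + 1) * c ^ k"
proof -
  have Q: "fps_nth Q \<in> wiener" by (rule wiener_finite_support(1)[OF support])
  have Qk: "fps_nth (Q ^ k) \<in> wiener" by (rule wiener_fps_power(1)[OF Q])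
  have "norm (fps_nth (Q ^ k) n) \<le> c ^ k" for n
  proof (rule norm_fps_nth_le_bound[OF wiener_fps_conv_radius[OF Qk]])
    fix z :: complex assume "norm z < 1"
    then show "norm (eval_fps (Q ^ k) z) \<le> c ^ k"
      using eval_fps_power[OF wiener_fps_in_radius[OF Q]] bound
      by (simp add: norm_power power_mono)
  qed
  then show ?thesis
    using wiener_finite_support(2)[of "k * N" "fps_nth (Q ^ k)" "c ^ k"]
          fps_nth_power_eq_0_above[OF support]
    by simp
qed

lemma wnorm_power_add_le:
  fixes Q R :: "complex fps"
  assumes "fps_nth Q \<in> wiener" "fps_nth R \<in> wiener"
  shows "wnorm (fps_nth ((Q + R) ^ n))
           \<le> (\<Sum>k\<le>n. real (n choose k) * wnorm (fps_nth (Q ^ k)) * wnorm (fps_nth (R ^ (n - k))))"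
proof -
  define T where "T k = fps_nth (Q ^ k * R ^ (n - k))" for k
  have T: "T k \<in> wiener" "wnorm (T k) \<le> wnorm (fps_nth (Q ^ k)) * wnorm (fps_nth (R ^ (n - k)))" for k
    unfolding T_def using wiener_fps_mult wiener_fps_power(1) assms by blast+
  have "fps_nth ((Q + R) ^ n) = (\<lambda>m. \<Sum>k\<le>n. of_nat (n choose k) * T k m)"
    by (simp add: binomial_ring fps_sum_nth fps_of_nat T_def mult.assoc fun_eq_iff)
  then have "wnorm (fps_nth ((Q + R) ^ n)) = wnorm (\<lambda>m. \<Sum>k\<le>n. of_nat (n choose k) * T k m)"
    by simp
  also have "\<dots> \<le> (\<Sum>k\<le>n. wnorm (\<lambda>m. of_nat (n choose k) * T k m))"
    by (rule wiener_sum(2)) (use wiener_cmult(1)[OF T(1)] in blast)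
  also have "\<dots> \<le> (\<Sum>k\<le>n. real (n choose k) * wnorm (fps_nth (Q ^ k)) * wnorm (fps_nth (R ^ (n - k))))"
    by (intro sum_mono) (simp add: wiener_cmult(2)[OF T(1)] mult.assoc mult_left_mono T(2))
  finally show ?thesis .
qed

lemma wiener_fps_split_small_tail:
  fixes P :: "complex fps"
  assumes P: "fps_nth P \<in> wiener" and "0 < \<epsilon>"
  obtains Q R N where "P = Q + R" "\<And>n. N < n \<Longrightarrow> fps_nth Q n = 0"
    "fps_nth R \<in> wiener" "wnorm (fps_nth R) \<le> \<epsilon>"
proof -
  obtain N where tail: "norm (\<Sum>i. norm (fps_nth P (i + N))) < \<epsilon>"
    using suminf_exist_split[OF \<open>0 < \<epsilon>\<close> P[unfolded wiener_iff]] by blast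
  define Q where "Q = Abs_fps (\<lambda>n. if n < N then fps_nth P n else 0)"
  define R where "R = P - Q"
  have R_nth: "fps_nth R n = (if n < N then 0 else fps_nth P n)" for n
    by (simp add: R_def Q_def)
  have R: "fps_nth R \<in> wiener"
    using P unfolding wiener_iff by (rule summable_comparison_test'[of _ 0]) (simp add: R_nth)
  have "wnorm (fps_nth R) = (\<Sum>i. norm (fps_nth R (i + N))) + (\<Sum>i<N. norm (fps_nth R i))"
    unfolding wnorm_def using R unfolding wiener_iff by (rule suminf_split_initial_segment)
  also have "\<dots> = (\<Sum>i. norm (fps_nth P (i + N)))" by (simp add: R_nth)
  finally have "wnorm (fps_nth R) \<le> \<epsilon>" using tail by simp
  moreover have "fps_nth Q n = 0" if "N < n" for n
    using that by (simp add: Q_def)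
  ultimately show thesis
    using that[of Q R N] R by (simp add: R_def)
qed

lemma wnorm_power_perturbed_polynomial_le:
  fixes Q R :: "complex fps"
  assumes support: "\<And>n. N < n \<Longrightarrow> fps_nth Q n = 0"
    and bound: "\<And>z. norm z < 1 \<Longrightarrow> norm (eval_fps Q z) \<le> c"
    and R: "fps_nth R \<in> wiener"
  shows "wnorm (fps_nth ((Q + R) ^ n)) \<le> (real n * real N + 1) * (c + wnorm (fps_nth R)) ^ n"
proof -
  have "0 \<le> c" using bound[of 0] by (rule order_trans[OF norm_ge_zero]) simp
  have Q: "fps_nth Q \<in> wiener"
    by (rule wiener_finite_support(1)) (use support in auto)
  have Q_power: "wnorm (fps_nth (Q ^ k)) \<le> (real n * real N + 1) * c ^ k" if "k \<le> n" for k
    using that \<open>0 \<le> c\<close>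
    by (intro order_trans[OF wnorm_power_finite_support_le[OF support bound]] mult_right_mono)
       (auto intro: mult_right_mono)
  have R_power: "wnorm (fps_nth (R ^ j)) \<le> wnorm (fps_nth R) ^ j" for j
    by (rule wiener_fps_power(2)[OF R])
  have "wnorm (fps_nth ((Q + R) ^ n))
          \<le> (\<Sum>k\<le>n. real (n choose k) * wnorm (fps_nth (Q ^ k)) * wnorm (fps_nth (R ^ (n - k))))"
    by (rule wnorm_power_add_le[OF Q R])
  also have "\<dots> \<le> (\<Sum>k\<le>n. real (n choose k) * ((real n * real N + 1) * c ^ k) * wnorm (fps_nth R) ^ (n - k))"
  proof (rule sum_mono, rule mult_mono)
    fix k assume "k \<in> {..n}"
    then show "real (n choose k) * wnorm (fps_nth (Q ^ k)) \<le> real (n choose k) * ((real n * real N + 1) * c ^ k)"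
      using Q_power by (simp add: mult_left_mono)
  qed (use R_power wnorm_nonneg[OF wiener_fps_power(1)[OF R]] wnorm_nonneg[OF R] \<open>0 \<le> c\<close> in auto)
  also have "\<dots> = (real n * real N + 1) * (c + wnorm (fps_nth R)) ^ n"
    unfolding binomial_ring[of c _ n] sum_distrib_left by (simp add: mult_ac)
  finally show ?thesis .
qed

lemma wnorm_power_tendsto_0:
  fixes P :: "complex fps"
  assumes P: "fps_nth P \<in> wiener"
    and bound: "\<And>z. norm z < 1 \<Longrightarrow> norm (eval_fps P z) \<le> \<rho>" and "\<rho> < 1"
  shows "(\<lambda>n. wnorm (fps_nth (P ^ n))) \<longlonglongrightarrow> 0"
proof -
  have "0 \<le> \<rho>" using bound[of 0] by (rule order_trans[OF norm_ge_zero]) simp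
  define \<epsilon> where "\<epsilon> = (1 - \<rho>) / 4"
  have "0 < \<epsilon>" using \<open>\<rho> < 1\<close> by (simp add: \<epsilon>_def)
  obtain Q R N where PQR: "P = Q + R" and Q_support: "\<And>n. N < n \<Longrightarrow> fps_nth Q n = 0"
    and R: "fps_nth R \<in> wiener" and R_small: "wnorm (fps_nth R) \<le> \<epsilon>"
    using wiener_fps_split_small_tail[OF P \<open>0 < \<epsilon>\<close>] by metis
  have Q_bound: "norm (eval_fps Q z) \<le> \<rho> + \<epsilon>" if "norm z < 1" for z
  proof -
    have "fps_nth Q = (\<lambda>n. fps_nth P n - fps_nth R n)" by (simp add: PQR fun_eq_iff)
    then have "eval_fps Q z = eval_fps P z - eval_fps R z"
      using that by (simp add: eval_fps_eq_wfun wfun_diff P R)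
    then have "norm (eval_fps Q z) \<le> norm (eval_fps P z) + norm (eval_fps R z)"
      by (simp add: norm_triangle_ineq4)
    also have "\<dots> \<le> \<rho> + \<epsilon>"
    proof (rule add_mono)
      show "norm (eval_fps R z) \<le> \<epsilon>"
        unfolding eval_fps_eq_wfun using norm_wfun_le_wnorm[OF R, of z] that R_small by simp
    qed (rule bound[OF that])
    finally show ?thesis .
  qed
  define q where "q = \<rho> + \<epsilon> + wnorm (fps_nth R)"
  have "0 \<le> q" "q < 1"
    using \<open>0 \<le> \<rho>\<close> \<open>\<rho> < 1\<close> \<open>0 < \<epsilon>\<close> R_small wnorm_nonneg[OF R]
    by (auto simp: q_def \<epsilon>_def field_simps)
  then have "(\<lambda>n. real N * (of_nat n * q ^ n) + q ^ n) \<longlonglongrightarrow> real N * 0 + 0"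
    by (intro tendsto_intros powser_times_n_limit_0 LIMSEQ_power_zero) auto
  then have majorant: "(\<lambda>n. (real n * real N + 1) * q ^ n) \<longlonglongrightarrow> 0"
    by (simp add: algebra_simps)
  have "wnorm (fps_nth (P ^ n)) \<le> (real n * real N + 1) * q ^ n" for n
    unfolding PQR q_def by (rule wnorm_power_perturbed_polynomial_le[of N Q _ R, OF Q_support Q_bound R])
  then show ?thesis
    by (intro tendsto_sandwich[OF _ _ tendsto_const majorant] always_eventually allI)
       (simp_all add: wnorm_nonneg wiener_fps_power(1)[OF P])
qed

lemma infsum_eq_suminf:
  fixes f :: "nat \<Rightarrow> 'a::banach"
  assumes "summable (\<lambda>n. norm (f n))"
  shows "infsum f UNIV = suminf f"
  using norm_summable_imp_has_sum[OF assms summable_sums[OF summable_norm_cancel[OF assms]]]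
  by (rule infsumI)

lemma suminf_swap_abs_summable:
  fixes g :: "nat \<Rightarrow> nat \<Rightarrow> 'a::{banach, second_countable_topology}"
  assumes rows: "\<And>n. summable (\<lambda>m. norm (g n m))"
    and total: "summable (\<lambda>n. \<Sum>m. norm (g n m))"
  shows "\<And>m. summable (\<lambda>n. norm (g n m))"
    and "summable (\<lambda>m. \<Sum>n. norm (g n m))"
    and "(\<Sum>m. \<Sum>n. g n m) = (\<Sum>n. \<Sum>m. g n m)"
proof -
  have row_sum: "infsum (\<lambda>m. norm (g n m)) UNIV = (\<Sum>m. norm (g n m))" for n
    using infsum_eq_suminf[of "\<lambda>m. norm (g n m)"] rows[of n] by simp
  have "(\<lambda>n. norm (infsum (\<lambda>m. norm (g n m)) UNIV)) summable_on UNIV"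
    using norm_summable_imp_summable_on[of "\<lambda>n. \<Sum>m. norm (g n m)"] total
    by (simp add: row_sum suminf_nonneg rows)
  then have "(\<lambda>p. norm (case p of (n, m) \<Rightarrow> g n m)) summable_on UNIV \<times> UNIV"
    using Infinite_Sum.abs_summable_on_Sigma_iff[where f="\<lambda>(n, m). g n m" and A=UNIV and B="\<lambda>_. UNIV"]
      norm_summable_imp_summable_on[of "\<lambda>m. norm (g _ m)"] rows
    by auto
  then have abs_swapped: "(\<lambda>p. norm (case p of (m, n) \<Rightarrow> g n m)) summable_on UNIV \<times> UNIV"
    using summable_on_swap[of "\<lambda>p. norm (case p of (n, m) \<Rightarrow> g n m)" UNIV UNIV]
    by (simp add: case_prod_unfold)
  then have cols: "\<And>m. (\<lambda>n. norm (g n m)) summable_on UNIV"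
    and col_sums: "(\<lambda>m. norm (infsum (\<lambda>n. norm (g n m)) UNIV)) summable_on UNIV"
    using Infinite_Sum.abs_summable_on_Sigma_iff[where f="\<lambda>(m, n). g n m" and A=UNIV and B="\<lambda>_. UNIV"]
    by auto
  show cols': "summable (\<lambda>n. norm (g n m))" for m
    using summable_on_imp_summable[OF cols] .
  have col_sum: "infsum (\<lambda>n. norm (g n m)) UNIV = (\<Sum>n. norm (g n m))" for m
    using infsum_eq_suminf[of "\<lambda>n. norm (g n m)"] cols'[of m] by simp
  show total': "summable (\<lambda>m. \<Sum>n. norm (g n m))"
    using summable_on_imp_summable[OF col_sums] by (simp add: col_sum suminf_nonneg cols')
  have col_norms: "summable (\<lambda>m. norm (\<Sum>n. g n m))"
    by (rule summable_comparison_test'[OF total', of 0]) (simp add: summable_norm cols')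
  have row_norms: "summable (\<lambda>n. norm (\<Sum>m. g n m))"
    by (rule summable_comparison_test'[OF total, of 0]) (simp add: summable_norm rows)
  have "infsum (\<lambda>m. infsum (\<lambda>n. g n m) UNIV) UNIV = infsum (\<lambda>n. infsum (\<lambda>m. g n m) UNIV) UNIV"
    by (rule infsum_swap_banach, rule abs_summable_summable)
       (use abs_swapped in \<open>simp add: case_prod_unfold\<close>)
  then show "(\<Sum>m. \<Sum>n. g n m) = (\<Sum>n. \<Sum>m. g n m)"
    by (simp add: infsum_eq_suminf cols' rows col_norms row_norms)
qed

text \<open>The coefficients of \<Sum> a_n P^n, that is, of C_P f when f has coefficients a.\<close>

definition comp_coeffs :: "complex fps \<Rightarrow> (nat \<Rightarrow> complex) \<Rightarrow> nat \<Rightarrow> complex" where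
  "comp_coeffs P a m = (\<Sum>n. a n * fps_nth (P ^ n) m)"

lemma comp_coeffs_wiener:
  fixes P :: "complex fps"
  assumes P: "fps_nth P \<in> wiener" and powers: "\<And>n. wnorm (fps_nth (P ^ n)) \<le> S"
    and a: "a \<in> wiener"
  shows "summable (\<lambda>n. norm (a n) * wnorm (fps_nth (P ^ n)))"
    and "\<And>m. summable (\<lambda>n. norm (a n * fps_nth (P ^ n) m))"
    and "comp_coeffs P a \<in> wiener"
    and "wnorm (comp_coeffs P a) \<le> (\<Sum>n. norm (a n) * wnorm (fps_nth (P ^ n)))"
proof -
  have Pn: "fps_nth (P ^ n) \<in> wiener" for n by (rule wiener_fps_power(1)[OF P])
  define g where "g n m = a n * fps_nth (P ^ n) m" for n m
  have rows: "summable (\<lambda>m. norm (g n m))" for n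
    using Pn[of n] by (simp add: g_def norm_mult wiener_iff summable_mult)
  have row_sum: "(\<Sum>m. norm (g n m)) = norm (a n) * wnorm (fps_nth (P ^ n))" for n
    using Pn[of n] by (simp add: g_def norm_mult wiener_iff wnorm_def suminf_mult)
  have "summable (\<lambda>n. norm (a n) * S)" using a by (simp add: wiener_iff summable_mult2)
  then show weighted: "summable (\<lambda>n. norm (a n) * wnorm (fps_nth (P ^ n)))"
    by (rule summable_comparison_test'[of _ 0])
       (use powers wnorm_nonneg[OF Pn] in \<open>auto intro: mult_left_mono\<close>)
  then have total: "summable (\<lambda>n. \<Sum>m. norm (g n m))" by (simp add: row_sum)
  note swap = suminf_swap_abs_summable[OF rows total]
  show "summable (\<lambda>n. norm (a n * fps_nth (P ^ n) m))" for m
    using swap(1) by (simp add: g_def)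
  have coeffs: "comp_coeffs P a m = (\<Sum>n. g n m)" for m by (simp add: comp_coeffs_def g_def)
  have col_norms: "summable (\<lambda>m. norm (\<Sum>n. g n m))"
    by (rule summable_comparison_test'[OF swap(2), of 0]) (simp add: summable_norm swap(1))
  then show "comp_coeffs P a \<in> wiener" by (simp add: wiener_iff coeffs)
  have "wnorm (comp_coeffs P a) \<le> (\<Sum>m. \<Sum>n. norm (g n m))"
    unfolding wnorm_def coeffs by (intro suminf_le col_norms swap(2) summable_norm swap(1))
  also have "\<dots> = (\<Sum>n. norm (a n) * wnorm (fps_nth (P ^ n)))"
    using suminf_swap_abs_summable(3)[of "\<lambda>n m. norm (g n m)"] rows total by (simp add: row_sum)
  finally show "wnorm (comp_coeffs P a) \<le> (\<Sum>n. norm (a n) * wnorm (fps_nth (P ^ n)))" .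
qed

lemma wfun_comp_coeffs:
  fixes P :: "complex fps"
  assumes P: "fps_nth P \<in> wiener" and powers: "\<And>n. wnorm (fps_nth (P ^ n)) \<le> S"
    and a: "a \<in> wiener" and z: "norm z < 1"
  shows "wfun (comp_coeffs P a) z = wfun a (eval_fps P z)"
proof -
  have Pn: "fps_nth (P ^ n) \<in> wiener" for n by (rule wiener_fps_power(1)[OF P])
  define h where "h n m = a n * fps_nth (P ^ n) m * z ^ m" for n m
  have h_le: "norm (h n m) \<le> norm (a n) * norm (fps_nth (P ^ n) m)" for n m
    using z by (simp add: h_def norm_mult norm_power mult_left_le power_le_one)
  have row_bound: "summable (\<lambda>m. norm (a n) * norm (fps_nth (P ^ n) m))" for n
    using Pn[of n] by (simp add: wiener_iff summable_mult)
  have h_rows: "summable (\<lambda>m. norm (h n m))" for n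
    by (rule summable_comparison_test'[OF row_bound[of n], of 0]) (simp add: h_le)
  have h_row_sum: "(\<Sum>m. norm (h n m)) \<le> norm (a n) * wnorm (fps_nth (P ^ n))" for n
    using suminf_le[OF h_le[of n] h_rows[of n] row_bound[of n]] Pn[of n]
    by (simp add: wiener_iff wnorm_def suminf_mult)
  have h_total: "summable (\<lambda>n. \<Sum>m. norm (h n m))"
    by (rule summable_comparison_test'[OF comp_coeffs_wiener(1)[OF P powers a]])
       (simp add: suminf_nonneg h_rows h_row_sum)
  have "wfun (comp_coeffs P a) z = (\<Sum>m. \<Sum>n. h n m)"
    unfolding wfun_def comp_coeffs_def h_def
    by (rule suminf_cong) (rule suminf_mult2[OF summable_norm_cancel[OF comp_coeffs_wiener(2)[OF P powers a]]])
  also have "\<dots> = (\<Sum>n. \<Sum>m. h n m)"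
    by (rule suminf_swap_abs_summable(3)[OF h_rows h_total])
  also have "\<dots> = (\<Sum>n. a n * eval_fps (P ^ n) z)"
    using wiener_fps_in_radius[OF Pn z]
    by (intro suminf_cong) (simp add: h_def eval_fps_def mult.assoc suminf_mult summable_fps)
  also have "\<dots> = wfun a (eval_fps P z)"
    using eval_fps_power[OF wiener_fps_in_radius[OF P z]] by (simp add: wfun_def)
  finally show ?thesis .
qed

lemma comp_coeffs_diff:
  fixes P :: "complex fps"
  assumes P: "fps_nth P \<in> wiener" and powers: "\<And>n. wnorm (fps_nth (P ^ n)) \<le> S"
    and a: "a \<in> wiener" and b: "b \<in> wiener"
  shows "comp_coeffs P (\<lambda>n. a n - b n) m = comp_coeffs P a m - comp_coeffs P b m"
proof -
  have coeff_le: "norm (fps_nth (P ^ n) m) \<le> S" for n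
    using norm_le_wnorm[OF wiener_fps_power(1)[OF P]] powers order_trans by blast
  have "summable (\<lambda>n. c n * fps_nth (P ^ n) m)" if "c \<in> wiener" for c
  proof (rule summable_norm_cancel, rule summable_comparison_test')
    show "summable (\<lambda>n. norm (c n) * S)" using that by (simp add: wiener_iff summable_mult2)
    show "norm (norm (c n * fps_nth (P ^ n) m)) \<le> norm (c n) * S" for n
      using coeff_le by (simp add: norm_mult mult_left_mono)
  qed
  from suminf_diff[OF this[OF a] this[OF b]] show ?thesis
    by (simp add: comp_coeffs_def left_diff_distrib)
qed

lemma comp_image_imp_eq_comp_coeffs:
  fixes P :: "complex fps"
  assumes P: "fps_nth P \<in> wiener" and powers: "\<And>n. wnorm (fps_nth (P ^ n)) \<le> S"
    and \<phi>: "\<And>z. norm z < 1 \<Longrightarrow> \<phi> z = eval_fps P z"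
    and a: "a \<in> wiener" and image: "comp_image \<phi> a b"
  shows "b = comp_coeffs P a"
  using image comp_coeffs_wiener(3)[OF P powers a] wfun_comp_coeffs[OF P powers a] \<phi>
  by (intro wiener_unique) (auto simp: comp_image_def)

lemma diagonal_convergent_subseq:
  fixes A :: "nat \<Rightarrow> nat \<Rightarrow> 'a::heine_borel"
  assumes "\<And>n. bounded (range (\<lambda>k. A k n))"
  shows "\<exists>r \<alpha>. strict_mono r \<and> (\<forall>n. (\<lambda>k. A (r k) n) \<longlonglongrightarrow> \<alpha> n)"
proof -
  let ?P = "\<lambda>n s. convergent (\<lambda>k. A (s k) n)"
  interpret subseqs ?P
  proof (unfold convergent_def, unfold subseqs_def, auto)
    fix n and s :: "nat \<Rightarrow> nat"
    have "bounded (range (\<lambda>k. A (s k) n))"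
      using assms[of n] by (rule bounded_subset) auto
    then obtain l s' where "strict_mono s'" "((\<lambda>k. A (s k) n) \<circ> s') \<longlonglongrightarrow> l"
      using bounded_imp_convergent_subsequence by blast
    then show "\<exists>s'. strict_mono s' \<and> (\<exists>l. (\<lambda>k. A (s (s' k)) n) \<longlonglongrightarrow> l)"
      by (auto simp: comp_def)
  qed
  have "?P n diagseq" for n
  proof -
    have "(\<lambda>k. A ((seqseq (Suc n) \<circ> (\<lambda>k. fold_reduce (Suc n) k (Suc n + k))) k) n)
            = (\<lambda>k. A (seqseq (Suc n) k) n) \<circ> (\<lambda>k. fold_reduce (Suc n) k (Suc n + k))"
      by auto
    then have "?P n (diagseq \<circ> (+) (Suc n))"
      unfolding diagseq_seqseq
      by (simp only:) (intro convergent_subseq_convergent seqseq_holds subseq_diagonal_rest)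
    then obtain L where "(\<lambda>k. A (diagseq (k + Suc n)) n) \<longlonglongrightarrow> L"
      by (auto simp: add.commute dest: convergentD)
    then have "(\<lambda>k. A (diagseq k) n) \<longlonglongrightarrow> L" by (rule LIMSEQ_offset)
    then show ?thesis by (auto simp: convergent_def)
  qed
  then show ?thesis
    using subseq_diagseq
    by (intro exI[of _ diagseq] exI[of _ "\<lambda>n. lim (\<lambda>k. A (diagseq k) n)"])
       (auto simp: convergent_LIMSEQ_iff)
qed

lemma weighted_wnorm_tendsto_0:
  assumes d: "\<And>k. d k \<in> wiener" and bounded: "\<And>k. wnorm (d k) \<le> M"
    and coords: "\<And>n. (\<lambda>k. d k n) \<longlonglongrightarrow> 0"
    and w: "\<And>n. 0 \<le> w n" "w \<longlonglongrightarrow> 0"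
  shows "(\<lambda>k. \<Sum>n. norm (d k n) * w n) \<longlonglongrightarrow> 0"
proof (rule LIMSEQ_I)
  fix e :: real assume "0 < e"
  have "0 \<le> M" using wnorm_nonneg[OF d] bounded order_trans by blast
  define \<delta> where "\<delta> = e / (4 * (M + 1))"
  have "0 < \<delta>" using \<open>0 < e\<close> \<open>0 \<le> M\<close> by (simp add: \<delta>_def)
  obtain N where "\<forall>n\<ge>N. norm (w n - 0) < \<delta>"
    using LIMSEQ_D[OF w(2) \<open>0 < \<delta>\<close>] by blast
  then have small: "w n \<le> \<delta>" if "N \<le> n" for n
    using that by (auto simp: abs_less_iff)
  have "(\<lambda>k. \<Sum>n<N. norm (d k n) * w n) \<longlonglongrightarrow> (\<Sum>n<N. norm (0::complex) * w n)"
    by (intro tendsto_sum tendsto_mult tendsto_norm coords tendsto_const)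
  then obtain k0 where head: "\<And>k. k0 \<le> k \<Longrightarrow> (\<Sum>n<N. norm (d k n) * w n) < e / 2"
    using LIMSEQ_D[of _ 0 "e / 2"] \<open>0 < e\<close> by fastforce
  show "\<exists>k0. \<forall>k\<ge>k0. norm ((\<Sum>n. norm (d k n) * w n) - 0) < e"
  proof (intro exI allI impI)
    fix k assume "k0 \<le> k"
    have sd: "summable (\<lambda>n. norm (d k n))" using d[of k] by (simp add: wiener_iff)
    have sdw: "summable (\<lambda>n. norm (d k n) * w n)"
      by (rule summable_comparison_test'[OF summable_mult2[OF sd, of \<delta>], of N])
         (use small w(1) in \<open>auto intro: mult_left_mono\<close>)
    have "(\<Sum>n. norm (d k (n + N)) * w (n + N)) \<le> (\<Sum>n. norm (d k (n + N)) * \<delta>)"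
      using small sdw sd
      by (intro suminf_le summable_ignore_initial_segment summable_mult2) (auto intro: mult_left_mono)
    also have "\<dots> = (\<Sum>n. norm (d k (n + N))) * \<delta>"
      using summable_ignore_initial_segment[OF sd] by (rule suminf_mult2[symmetric])
    also have "\<dots> \<le> M * \<delta>"
    proof (rule mult_right_mono)
      show "(\<Sum>n. norm (d k (n + N))) \<le> M"
        using suminf_split_initial_segment[OF sd, of N] sum_nonneg[of "{..<N}" "\<lambda>n. norm (d k n)"]
          bounded[of k] by (simp add: wnorm_def)
    qed (use \<open>0 < \<delta>\<close> in simp)
    also have "\<dots> < e / 2"
      using \<open>0 < e\<close> \<open>0 \<le> M\<close> by (simp add: \<delta>_def field_simps add_pos_nonneg)
    finally have tail: "(\<Sum>n. norm (d k (n + N)) * w (n + N)) < e / 2" .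
    have "0 \<le> (\<Sum>n. norm (d k n) * w n)" using sdw w(1) by (simp add: suminf_nonneg)
    then show "norm ((\<Sum>n. norm (d k n) * w n) - 0) < e"
      using suminf_split_initial_segment[OF sdw, of N] tail head[OF \<open>k0 \<le> k\<close>] by simp
  qed
qed

lemma comp_compact_if_wnorm_powers_tendsto_0:
  fixes P :: "complex fps"
  assumes P: "fps_nth P \<in> wiener" and powers: "(\<lambda>n. wnorm (fps_nth (P ^ n))) \<longlonglongrightarrow> 0"
    and \<phi>: "\<And>z. norm z < 1 \<Longrightarrow> \<phi> z = eval_fps P z"
  shows "comp_compact \<phi>"
  unfolding comp_compact_def
proof (intro allI impI)
  obtain S where S: "\<And>n. wnorm (fps_nth (P ^ n)) \<le> S"
    using convergent_imp_Bseq[OF convergentI[OF powers]] unfolding Bseq_def real_norm_def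
    by (metis abs_le_D1)
  fix A B :: "nat \<Rightarrow> nat \<Rightarrow> complex"
  assume "\<forall>k. A k \<in> wiener" "\<exists>M. \<forall>k. wnorm (A k) \<le> M" "\<forall>k. comp_image \<phi> (A k) (B k)"
  then obtain M where A: "\<And>k. A k \<in> wiener" and A_bounded: "\<And>k. wnorm (A k) \<le> M"
    and B: "\<And>k. B k = comp_coeffs P (A k)"
    using comp_image_imp_eq_comp_coeffs[OF P S \<phi>] by metis
  have "bounded (range (\<lambda>k. A k n))" for n
    unfolding bounded_iff using norm_le_wnorm[OF A] A_bounded order_trans by blast
  then obtain r \<alpha> where r: "strict_mono r" and \<alpha>_lim: "\<And>n. (\<lambda>k. A (r k) n) \<longlonglongrightarrow> \<alpha> n"
    using diagonal_convergent_subseq by metis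
  have \<alpha>: "\<alpha> \<in> wiener" "wnorm \<alpha> \<le> M"
    using wiener_pointwise_limit[of "\<lambda>k. A (r k)", OF A A_bounded \<alpha>_lim] by auto
  define d where "d k = (\<lambda>n. A (r k) n - \<alpha> n)" for k
  have d: "d k \<in> wiener" "wnorm (d k) \<le> M + M" for k
    using wiener_diff[OF A \<alpha>(1), of "r k"] A_bounded[of "r k"] \<alpha>(2) unfolding d_def by auto
  have "(\<lambda>n. B (r k) n - comp_coeffs P \<alpha> n) = comp_coeffs P (d k)" for k
    using comp_coeffs_diff[OF P S A \<alpha>(1)] by (simp add: B d_def fun_eq_iff)
  then have dist: "wnorm (\<lambda>n. B (r k) n - comp_coeffs P \<alpha> n) \<le> (\<Sum>n. norm (d k n) * wnorm (fps_nth (P ^ n)))"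
    for k using comp_coeffs_wiener(4)[OF P S d(1)] by simp
  have majorant: "(\<lambda>k. \<Sum>n. norm (d k n) * wnorm (fps_nth (P ^ n))) \<longlonglongrightarrow> 0"
  proof (rule weighted_wnorm_tendsto_0[OF d _ _ powers])
    show "(\<lambda>k. d k n) \<longlonglongrightarrow> 0" for n
      using tendsto_diff[OF \<alpha>_lim tendsto_const, of n "\<alpha> n"] by (simp add: d_def)
  qed (rule wnorm_nonneg[OF wiener_fps_power(1)[OF P]])
  have dist_nonneg: "0 \<le> wnorm (\<lambda>n. B (r k) n - comp_coeffs P \<alpha> n)" for k
    unfolding B by (intro wnorm_nonneg wiener_diff(1) comp_coeffs_wiener(3)[OF P S] A \<alpha>(1))
  have "(\<lambda>k. wnorm (\<lambda>n. B (r k) n - comp_coeffs P \<alpha> n)) \<longlonglongrightarrow> 0"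
    by (rule tendsto_sandwich[OF _ _ tendsto_const majorant]) (simp_all add: dist dist_nonneg)
  then show "\<exists>r c. strict_mono r \<and> c \<in> wiener \<and> (\<lambda>k. wnorm (\<lambda>n. B (r k) n - c n)) \<longlonglongrightarrow> 0"
    using r comp_coeffs_wiener(3)[OF P S \<alpha>(1)] by blast
qed

lemma SUP_norm_lt_1_if_power_le_half:
  fixes \<phi> :: "complex \<Rightarrow> complex"
  assumes "0 < m" and power: "\<And>z. norm z < 1 \<Longrightarrow> norm (\<phi> z) ^ m \<le> 1 / 2"
  shows "(SUP z\<in>ball 0 1. norm (\<phi> z)) < 1"
proof -
  have "norm (\<phi> z) \<le> root m (1 / 2)" if "norm z < 1" for z
  proof -
    have "root m (norm (\<phi> z) ^ m) \<le> root m (1 / 2)"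
      using power[OF that] \<open>0 < m\<close> by simp
    then show ?thesis using \<open>0 < m\<close> by (simp add: real_root_power_cancel)
  qed
  then have "(SUP z\<in>ball 0 1. norm (\<phi> z)) \<le> root m (1 / 2)"
    by (intro cSUP_least) auto
  also have "\<dots> < 1" using \<open>0 < m\<close> by simp
  finally show ?thesis .
qed

lemma SUP_norm_lt_1_if_comp_compact:
  assumes into: "\<And>z. norm z < 1 \<Longrightarrow> norm (\<phi> z) < 1"
    and maps: "comp_maps_wiener \<phi>" and compact: "comp_compact \<phi>"
  shows "(SUP z\<in>ball 0 1. norm (\<phi> z)) < 1"
proof -
  have "\<forall>k. \<exists>b. comp_image \<phi> (monomial_coeffs k) b"
    using maps monomial_coeffs(1) unfolding comp_maps_wiener_def by blast
  then obtain B where B: "\<And>k. comp_image \<phi> (monomial_coeffs k) (B k)"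
    by metis
  moreover have "\<exists>M. \<forall>k. wnorm (monomial_coeffs k) \<le> M"
    by (auto simp: monomial_coeffs)
  ultimately obtain r c where r: "strict_mono r" and c: "c \<in> wiener"
    and lim: "(\<lambda>k. wnorm (\<lambda>n. B (r k) n - c n)) \<longlonglongrightarrow> 0"
    using compact monomial_coeffs(1) unfolding comp_compact_def by blast
  have close: "norm (\<phi> z ^ r k - wfun c z) \<le> wnorm (\<lambda>n. B (r k) n - c n)" if "norm z < 1" for z k
  proof -
    have "B (r k) \<in> wiener" "wfun (B (r k)) z = \<phi> z ^ r k"
      using B[of "r k"] that by (simp_all add: comp_image_def monomial_coeffs)
    then show ?thesis
      using norm_wfun_le_wnorm[OF wiener_diff(1)[OF _ c], of "B (r k)" z] wfun_diff[OF _ c, of "B (r k)" z] that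
      by simp
  qed
  have c_vanishes: "wfun c z = 0" if "norm z < 1" for z
  proof -
    have "(\<lambda>k. \<phi> z ^ r k) \<longlonglongrightarrow> 0"
      using LIMSEQ_subseq_LIMSEQ[OF LIMSEQ_power_zero[OF into[OF that]] r] by (simp add: comp_def)
    moreover have "(\<lambda>k. \<phi> z ^ r k - wfun c z) \<longlonglongrightarrow> 0"
      by (rule Lim_null_comparison[OF _ lim]) (use close[OF that] in auto)
    ultimately have "(\<lambda>k. \<phi> z ^ r k - (\<phi> z ^ r k - wfun c z)) \<longlonglongrightarrow> 0 - 0"
      by (rule tendsto_diff)
    then show ?thesis by (simp add: LIMSEQ_const_iff)
  qed
  have "\<forall>\<^sub>F k in sequentially. wnorm (\<lambda>n. B (r k) n - c n) < 1 / 2 \<and> 1 \<le> k"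
    using order_tendstoD(2)[OF lim, of "1 / 2"] eventually_ge_at_top[of 1]
    by (auto intro: eventually_conj)
  then obtain k where k: "wnorm (\<lambda>n. B (r k) n - c n) < 1 / 2" "1 \<le> k"
    unfolding eventually_sequentially by blast
  have "0 < r k" using seq_suble[OF r, of k] k(2) by simp
  moreover have "norm (\<phi> z) ^ r k \<le> 1 / 2" if "norm z < 1" for z
    using close[OF that, of k] c_vanishes[OF that] k(1) by (simp add: norm_power)
  ultimately show ?thesis by (rule SUP_norm_lt_1_if_power_le_half)
qed

lemma nonconstant_holomorphic_maps_into_ball:
  assumes "\<phi> holomorphic_on ball 0 1" "\<phi> ` ball 0 1 \<subseteq> cball 0 1"
    and "\<not> (\<exists>c. \<forall>z\<in>ball 0 1. \<phi> z = c)"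
  shows "\<phi> ` ball 0 1 \<subseteq> ball 0 1"
proof -
  have "open (\<phi> ` ball 0 1)"
    by (rule open_mapping_thm[OF assms(1)]) (use assms(3) in \<open>auto simp: constant_on_def\<close>)
  then have "\<phi> ` ball 0 1 \<subseteq> interior (cball 0 1)"
    using assms(2) interior_maximal by blast
  then show ?thesis by simp
qed

theorem proposition1:
  fixes \<phi> :: "complex \<Rightarrow> complex"
  assumes "\<phi> holomorphic_on ball 0 1"
    and "\<phi> ` ball 0 1 \<subseteq> cball 0 1"
    and "\<not> (\<exists>c. \<forall>z\<in>ball 0 1. \<phi> z = c)"
    and "comp_maps_wiener \<phi>"
  shows "comp_compact \<phi> \<longleftrightarrow> (SUP z\<in>ball 0 1. norm (\<phi> z)) < 1"
proof
  have into: "norm (\<phi> z) < 1" if "norm z < 1" for z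
    using nonconstant_holomorphic_maps_into_ball[OF assms(1-3)] that by (auto simp: image_subset_iff)
  show "comp_compact \<phi> \<Longrightarrow> (SUP z\<in>ball 0 1. norm (\<phi> z)) < 1"
    by (rule SUP_norm_lt_1_if_comp_compact[OF into assms(4)])
  assume sup: "(SUP z\<in>ball 0 1. norm (\<phi> z)) < 1"
  obtain p where p: "comp_image \<phi> (monomial_coeffs 1) p"
    using assms(4) monomial_coeffs(1) unfolding comp_maps_wiener_def by blast
  have "fps_nth (Abs_fps p) = p" by (simp add: fun_eq_iff)
  then have P: "fps_nth (Abs_fps p) \<in> wiener" and \<phi>: "\<And>z. norm z < 1 \<Longrightarrow> \<phi> z = eval_fps (Abs_fps p) z"
    using p by (auto simp: comp_image_def eval_fps_eq_wfun monomial_coeffs)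
  have "bdd_above ((\<lambda>z. norm (\<phi> z)) ` ball 0 1)"
    by (rule bdd_aboveI[of _ 1]) (auto intro!: less_imp_le into)
  then have "norm (eval_fps (Abs_fps p) z) \<le> (SUP z\<in>ball 0 1. norm (\<phi> z))" if "norm z < 1" for z
    using that by (simp add: \<phi>[OF that, symmetric]) (rule cSUP_upper; simp)
  then show "comp_compact \<phi>"
    by (intro comp_compact_if_wnorm_powers_tendsto_0[OF P _ \<phi>] wnorm_power_tendsto_0[OF P _ sup])
qed

end
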